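(* Let $x_0\in\mathbb{R}^n$, $A\in\mathbb{R}^{n\times n}$, $C\in\mathbb{R}^{1\times n}$ and $\mathbf{y}\in\mathbb{R}[\mathfrak{q},\mathfrak{q}^*]$. If $$w=(Cx_0,\ CAx_0,\ CA^2x_0,\ \ldots)\in\ell_{2+},$$ then there exist $m\in\mathbb{N}$, $\bar x_0\in\mathbb{R}^m$, $\bar A\in\mathbb{R}^{m\times m}$ and $\bar C\in\mathbb{R}^{1\times m}$ such that $$\mathbf{y}w=(\bar C\bar x_0,\ \bar C\bar A\bar x_0,\ \bar C\bar A^2\bar x_0,\ \ldots)\in\ell_{2+}.$$
   Context: $\ell_{2+}$ is the space of square-summable real sequences $(y[0],y[1],\ldots)$. The forward shift is $\mathfrak{q}:(y[0],y[1],\ldots)\mapsto(y[1],y[2],\ldots)$ and its adjoint is $\mathfrak{q}^*:(y[0],y[1],\ldots)\mapsto(0,y[0],y[1],\ldots)$. $\mathbb{R}[\mathfrak{q},\mathfrak{q}^*]=\{\sum_{i=0}^{N-1}\sum_{j=0}^{N-1}\alpha_{ij}(\mathfrak{q}^* )^i\mathfrak{q}^j : N\in\mathbb{N},\ \alpha_{ij}\in\mathbb{R}\}$, operators acting on $\ell_{2+}$. *)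

theory Defs
  imports "HOL-Analysis.Analysis"
begin

definition in_l2p :: "(nat \<Rightarrow> real) \<Rightarrow> bool" where
  "in_l2p y \<longleftrightarrow> summable (\<lambda>k. (y k)\<^sup>2)"

definition fshift :: "(nat \<Rightarrow> real) \<Rightarrow> (nat \<Rightarrow> real)" where
  "fshift y = (\<lambda>k. y (Suc k))"

definition bshift :: "(nat \<Rightarrow> real) \<Rightarrow> (nat \<Rightarrow> real)" where
  "bshift y = (\<lambda>k. if k = 0 then 0 else y (k - 1))"

definition qpoly_ops :: "((nat \<Rightarrow> real) \<Rightarrow> (nat \<Rightarrow> real)) set" where
  "qpoly_ops = {Y. \<exists>(N::nat) (\<alpha>::nat \<Rightarrow> nat \<Rightarrow> real).
      Y = (\<lambda>y k. \<Sum>i<N. \<Sum>j<N. \<alpha> i j * ((bshift ^^ i) ((fshift ^^ j) y)) k)}"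

text \<open>Output sequence k \<mapsto> C A^k x0 for a system of state dimension m,
  with matrices/vectors given by their entries at indices below m.\<close>
definition mat_vec_n :: "nat \<Rightarrow> (nat \<Rightarrow> nat \<Rightarrow> real) \<Rightarrow> (nat \<Rightarrow> real) \<Rightarrow> (nat \<Rightarrow> real)" where
  "mat_vec_n m A x = (\<lambda>i. \<Sum>j<m. A i j * x j)"

definition sys_output :: "nat \<Rightarrow> (nat \<Rightarrow> real) \<Rightarrow> (nat \<Rightarrow> nat \<Rightarrow> real) \<Rightarrow> (nat \<Rightarrow> real) \<Rightarrow> (nat \<Rightarrow> real)" where
  "sys_output m x0 A C = (\<lambda>k. \<Sum>i<m. C i * ((mat_vec_n m A ^^ k) x0) i)"

end

theory Submission
  imports Defs
begin

text \<open>Finite-dimensional realizations and square-summability are both preserved by linear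
  combinations, by the forward shift and by its adjoint, and every operator of
  \<open>\<real>[q, q\<^sup>*]\<close> is composed of these operations. For a sum of outputs take the
  block-diagonal system; for the forward shift replace the initial state \<open>x\<^sub>0\<close> by \<open>A x\<^sub>0\<close>;
  for the adjoint shift add one state coordinate that starts at \<open>1\<close>, outputs \<open>0\<close> and, after
  one step, injects \<open>x\<^sub>0\<close> into the original state.\<close>

lemma sum_lessThan_add:
  "(\<Sum>j<a + b. g j) = (\<Sum>j<a. g j) + (\<Sum>j<b. g (a + j))" for g :: "nat \<Rightarrow> 'a::comm_monoid_add"
  by (induction b) (auto simp: add.assoc)

definition realizable :: "(nat \<Rightarrow> real) \<Rightarrow> bool" where
  "realizable w \<longleftrightarrow> (\<exists>m x A C. w = sys_output m x A C)"

lemma realizable_zero: "realizable (\<lambda>k. 0)"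
  unfolding realizable_def sys_output_def by (rule exI[of _ 0]) simp

lemma realizable_cmult:
  assumes "realizable w" shows "realizable (\<lambda>k. c * w k)"
proof -
  obtain m x A C where "w = sys_output m x A C"
    using assms unfolding realizable_def by blast
  then have "(\<lambda>k. c * w k) = sys_output m x A (\<lambda>i. c * C i)"
    by (simp add: sys_output_def sum_distrib_left mult.assoc)
  then show ?thesis unfolding realizable_def by blast
qed

lemma mat_vec_n_pow_Suc_apply:
  "(mat_vec_n m A ^^ Suc k) x i = (\<Sum>j<m. A i j * (mat_vec_n m A ^^ k) x j)"
  by (simp add: mat_vec_n_def)

lemma sys_output_Suc: "sys_output m x A C (Suc k) = sys_output m (mat_vec_n m A x) A C k"
  by (simp add: sys_output_def funpow_Suc_right del: funpow.simps)

lemma realizable_fshift: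
  assumes "realizable w" shows "realizable (fshift w)"
proof -
  obtain m x A C where "w = sys_output m x A C"
    using assms unfolding realizable_def by blast
  then have "fshift w = sys_output m (mat_vec_n m A x) A C"
    by (simp add: fshift_def sys_output_Suc)
  then show ?thesis unfolding realizable_def by blast
qed

definition vec_append :: "nat \<Rightarrow> (nat \<Rightarrow> 'a) \<Rightarrow> (nat \<Rightarrow> 'a) \<Rightarrow> nat \<Rightarrow> 'a" where
  "vec_append m u v i = (if i < m then u i else v (i - m))"

lemma vec_append_less [simp]: "i < m \<Longrightarrow> vec_append m u v i = u i"
  and vec_append_add [simp]: "vec_append m u v (m + j) = v j"
  by (simp_all add: vec_append_def)

definition block_diag ::
    "nat \<Rightarrow> (nat \<Rightarrow> nat \<Rightarrow> 'a::zero) \<Rightarrow> (nat \<Rightarrow> nat \<Rightarrow> 'a) \<Rightarrow> nat \<Rightarrow> nat \<Rightarrow> 'a" where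
  "block_diag m A B i j =
    (if i < m \<and> j < m then A i j else if m \<le> i \<and> m \<le> j then B (i - m) (j - m) else 0)"

lemma mat_vec_n_pow_block_diag:
  assumes "i < m\<^sub>1 + m\<^sub>2"
  shows "(mat_vec_n (m\<^sub>1 + m\<^sub>2) (block_diag m\<^sub>1 A\<^sub>1 A\<^sub>2) ^^ k) (vec_append m\<^sub>1 x\<^sub>1 x\<^sub>2) i =
    vec_append m\<^sub>1 ((mat_vec_n m\<^sub>1 A\<^sub>1 ^^ k) x\<^sub>1) ((mat_vec_n m\<^sub>2 A\<^sub>2 ^^ k) x\<^sub>2) i"
  using assms
proof (induction k arbitrary: i)
  case 0
  then show ?case by (simp add: vec_append_def)
next
  case (Suc k)
  let ?v = "(mat_vec_n (m\<^sub>1 + m\<^sub>2) (block_diag m\<^sub>1 A\<^sub>1 A\<^sub>2) ^^ k) (vec_append m\<^sub>1 x\<^sub>1 x\<^sub>2)"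
  have v\<^sub>1: "?v j = (mat_vec_n m\<^sub>1 A\<^sub>1 ^^ k) x\<^sub>1 j" if "j < m\<^sub>1" for j
    using Suc.IH[of j] that by simp
  have v\<^sub>2: "?v (m\<^sub>1 + j) = (mat_vec_n m\<^sub>2 A\<^sub>2 ^^ k) x\<^sub>2 j" if "j < m\<^sub>2" for j
    using Suc.IH[of "m\<^sub>1 + j"] that by simp
  have "(mat_vec_n (m\<^sub>1 + m\<^sub>2) (block_diag m\<^sub>1 A\<^sub>1 A\<^sub>2) ^^ Suc k) (vec_append m\<^sub>1 x\<^sub>1 x\<^sub>2) i
      = (\<Sum>j<m\<^sub>1. block_diag m\<^sub>1 A\<^sub>1 A\<^sub>2 i j * ?v j)
        + (\<Sum>j<m\<^sub>2. block_diag m\<^sub>1 A\<^sub>1 A\<^sub>2 i (m\<^sub>1 + j) * ?v (m\<^sub>1 + j))"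
    unfolding mat_vec_n_pow_Suc_apply by (rule sum_lessThan_add)
  also have "\<dots> = vec_append m\<^sub>1 ((mat_vec_n m\<^sub>1 A\<^sub>1 ^^ Suc k) x\<^sub>1) ((mat_vec_n m\<^sub>2 A\<^sub>2 ^^ Suc k) x\<^sub>2) i"
    using Suc.prems
    by (auto simp: block_diag_def vec_append_def v\<^sub>1 v\<^sub>2 mat_vec_n_pow_Suc_apply
        simp del: funpow.simps intro!: sum.cong)
  finally show ?case .
qed

lemma sys_output_block_diag:
  "sys_output (m\<^sub>1 + m\<^sub>2) (vec_append m\<^sub>1 x\<^sub>1 x\<^sub>2) (block_diag m\<^sub>1 A\<^sub>1 A\<^sub>2) (vec_append m\<^sub>1 C\<^sub>1 C\<^sub>2) k
    = sys_output m\<^sub>1 x\<^sub>1 A\<^sub>1 C\<^sub>1 k + sys_output m\<^sub>2 x\<^sub>2 A\<^sub>2 C\<^sub>2 k"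
  unfolding sys_output_def sum_lessThan_add
  by (simp add: mat_vec_n_pow_block_diag)

lemma realizable_add:
  assumes "realizable w\<^sub>1" and "realizable w\<^sub>2"
  shows "realizable (\<lambda>k. w\<^sub>1 k + w\<^sub>2 k)"
proof -
  obtain m\<^sub>1 x\<^sub>1 A\<^sub>1 C\<^sub>1 m\<^sub>2 x\<^sub>2 A\<^sub>2 C\<^sub>2 where
    "w\<^sub>1 = sys_output m\<^sub>1 x\<^sub>1 A\<^sub>1 C\<^sub>1" and "w\<^sub>2 = sys_output m\<^sub>2 x\<^sub>2 A\<^sub>2 C\<^sub>2"
    using assms unfolding realizable_def by blast
  then have "(\<lambda>k. w\<^sub>1 k + w\<^sub>2 k) = sys_output (m\<^sub>1 + m\<^sub>2) (vec_append m\<^sub>1 x\<^sub>1 x\<^sub>2)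
      (block_diag m\<^sub>1 A\<^sub>1 A\<^sub>2) (vec_append m\<^sub>1 C\<^sub>1 C\<^sub>2)"
    by (simp add: fun_eq_iff sys_output_block_diag)
  then show ?thesis unfolding realizable_def by blast
qed

definition border_col :: "nat \<Rightarrow> (nat \<Rightarrow> nat \<Rightarrow> 'a::zero) \<Rightarrow> (nat \<Rightarrow> 'a) \<Rightarrow> nat \<Rightarrow> nat \<Rightarrow> 'a" where
  "border_col m A x i j = (if i < m then (if j < m then A i j else x i) else 0)"

lemma mat_vec_n_pow_border_col:
  assumes "i \<le> m"
  shows "(mat_vec_n (Suc m) (border_col m A x\<^sub>0) ^^ Suc k) (\<lambda>i. if i = m then 1 else 0) i =
    (if i < m then (mat_vec_n m A ^^ k) x\<^sub>0 i else 0)"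
  using assms
proof (induction k arbitrary: i)
  case 0
  then show ?case by (simp add: mat_vec_n_def border_col_def)
next
  case (Suc k)
  let ?v = "(mat_vec_n (Suc m) (border_col m A x\<^sub>0) ^^ Suc k) (\<lambda>i. if i = m then 1 else 0)"
  have v: "?v j = (if j < m then (mat_vec_n m A ^^ k) x\<^sub>0 j else 0)" if "j \<le> m" for j
    using Suc.IH that .
  have "(mat_vec_n (Suc m) (border_col m A x\<^sub>0) ^^ Suc (Suc k)) (\<lambda>i. if i = m then 1 else 0) i
      = (\<Sum>j<m. border_col m A x\<^sub>0 i j * ?v j) + border_col m A x\<^sub>0 i m * ?v m"
    by (simp only: mat_vec_n_pow_Suc_apply sum.lessThan_Suc)
  also have "\<dots> = (\<Sum>j<m. border_col m A x\<^sub>0 i j * (mat_vec_n m A ^^ k) x\<^sub>0 j)"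
    by (simp add: v del: funpow.simps)
  also have "\<dots> = (if i < m then (mat_vec_n m A ^^ Suc k) x\<^sub>0 i else 0)"
    by (simp add: border_col_def mat_vec_n_pow_Suc_apply del: funpow.simps)
  finally show ?case .
qed

lemma realizable_bshift:
  assumes "realizable w" shows "realizable (bshift w)"
proof -
  obtain m x\<^sub>0 A C where w: "w = sys_output m x\<^sub>0 A C"
    using assms unfolding realizable_def by blast
  define C' where "C' \<equiv> \<lambda>i. if i < m then C i else (0::real)"
  have "bshift w k = sys_output (Suc m) (\<lambda>i. if i = m then 1 else 0) (border_col m A x\<^sub>0) C' k" for k
  proof (cases k)
    case 0
    then show ?thesis by (simp add: bshift_def sys_output_def C'_def)
  next
    case (Suc k')
    then show ?thesis
      by (simp add: bshift_def w sys_output_def C'_def mat_vec_n_pow_border_col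
          del: funpow.simps)
  qed
  then show ?thesis unfolding realizable_def by blast
qed

lemma realizable_vec:
  fixes x\<^sub>0 :: "real ^ 'n" and A :: "real ^ 'n ^ 'n" and C :: "real ^ 'n"
  shows "realizable (\<lambda>k. C \<bullet> (((\<lambda>v. A *v v) ^^ k) x\<^sub>0))"
proof -
  obtain f :: "nat \<Rightarrow> 'n" where f: "bij_betw f {..<CARD('n)} UNIV"
    using ex_bij_betw_nat_finite[of "UNIV :: 'n set"] by (auto simp: atLeast0LessThan)
  have reindex: "(\<Sum>j<CARD('n). g (f j)) = (\<Sum>j\<in>UNIV. g j)" for g :: "'n \<Rightarrow> real"
    using sum.reindex_bij_betw[OF f] by simp
  define xb where "xb i = x\<^sub>0 $ f i" for i
  define Ab where "Ab i j = A $ f i $ f j" for i j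
  have state: "(mat_vec_n CARD('n) Ab ^^ k) xb i = (((\<lambda>v. A *v v) ^^ k) x\<^sub>0) $ f i"
    if "i < CARD('n)" for i k
    using that
  proof (induction k arbitrary: i)
    case 0
    then show ?case by (simp add: xb_def)
  next
    case (Suc k)
    let ?u = "((\<lambda>v. A *v v) ^^ k) x\<^sub>0"
    have "(mat_vec_n CARD('n) Ab ^^ Suc k) xb i = (\<Sum>j<CARD('n). Ab i j * ?u $ f j)"
      using Suc.IH by (auto simp: mat_vec_n_pow_Suc_apply simp del: funpow.simps intro!: sum.cong)
    also have "\<dots> = (\<Sum>j\<in>UNIV. A $ f i $ j * ?u $ j)"
      using reindex[of "\<lambda>j. A $ f i $ j * ?u $ j"] by (simp add: Ab_def)
    also have "\<dots> = (A *v ?u) $ f i"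
      by (simp add: matrix_vector_mult_def)
    finally show ?case by simp
  qed
  have "C \<bullet> (((\<lambda>v. A *v v) ^^ k) x\<^sub>0) = sys_output CARD('n) xb Ab (\<lambda>i. C $ f i) k" for k
    using reindex[of "\<lambda>j. C $ j * (((\<lambda>v. A *v v) ^^ k) x\<^sub>0) $ j"]
    by (simp add: sys_output_def state inner_vec_def)
  then show ?thesis unfolding realizable_def by blast
qed

lemma in_l2p_zero: "in_l2p (\<lambda>k. 0)"
  by (simp add: in_l2p_def)

lemma in_l2p_cmult: "in_l2p w \<Longrightarrow> in_l2p (\<lambda>k. c * w k)"
  unfolding in_l2p_def by (simp add: power_mult_distrib summable_mult)

lemma in_l2p_add:
  assumes "in_l2p w\<^sub>1" and "in_l2p w\<^sub>2"
  shows "in_l2p (\<lambda>k. w\<^sub>1 k + w\<^sub>2 k)"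
  unfolding in_l2p_def
proof (rule summable_comparison_test'[where N = 0])
  show "summable (\<lambda>k. 2 * (w\<^sub>1 k)\<^sup>2 + 2 * (w\<^sub>2 k)\<^sup>2)"
    using assms unfolding in_l2p_def by (intro summable_add summable_mult)
  have "(a + b)\<^sup>2 \<le> 2 * a\<^sup>2 + 2 * b\<^sup>2" for a b :: real
    using zero_le_power2[of "a - b"] by (simp add: power2_eq_square algebra_simps)
  then show "norm ((w\<^sub>1 k + w\<^sub>2 k)\<^sup>2) \<le> 2 * (w\<^sub>1 k)\<^sup>2 + 2 * (w\<^sub>2 k)\<^sup>2" for k
    by simp
qed

lemma in_l2p_fshift: "in_l2p w \<Longrightarrow> in_l2p (fshift w)"
  unfolding in_l2p_def fshift_def using summable_Suc_iff[of "\<lambda>k. (w k)\<^sup>2"] by simp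

lemma in_l2p_bshift: "in_l2p w \<Longrightarrow> in_l2p (bshift w)"
  unfolding in_l2p_def bshift_def
  using summable_Suc_iff[of "\<lambda>k. (if k = 0 then 0 else w (k - 1))\<^sup>2"] by simp

lemma qpoly_ops_closed:
  fixes S :: "(nat \<Rightarrow> real) set"
  assumes "Y \<in> qpoly_ops" and "w \<in> S"
    and zero: "(\<lambda>k. 0) \<in> S"
    and add: "\<And>u v. u \<in> S \<Longrightarrow> v \<in> S \<Longrightarrow> (\<lambda>k. u k + v k) \<in> S"
    and cmult: "\<And>c u. u \<in> S \<Longrightarrow> (\<lambda>k. c * u k) \<in> S"
    and fshift: "\<And>u. u \<in> S \<Longrightarrow> fshift u \<in> S"
    and bshift: "\<And>u. u \<in> S \<Longrightarrow> bshift u \<in> S"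
  shows "Y w \<in> S"
proof -
  have sum: "(\<lambda>k. \<Sum>i<n. u i k) \<in> S" if "\<And>i. i < n \<Longrightarrow> u i \<in> S" for n and u :: "nat \<Rightarrow> nat \<Rightarrow> real"
    using that by (induction n) (simp_all add: zero add)
  have "(bshift ^^ i) ((fshift ^^ j) w) \<in> S" for i j
  proof -
    have "(fshift ^^ j) w \<in> S"
      by (induction j) (simp_all add: \<open>w \<in> S\<close> fshift)
    then show ?thesis
      by (induction i) (simp_all add: bshift)
  qed
  moreover obtain N \<alpha> where
    "Y = (\<lambda>y k. \<Sum>i<N. \<Sum>j<N. \<alpha> i j * ((bshift ^^ i) ((fshift ^^ j) y)) k)"
    using assms(1) unfolding qpoly_ops_def by blast
  ultimately show ?thesis
    by (simp add: sum cmult)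
qed

theorem lemma1:
  fixes x0 :: "real ^ 'n" and A :: "real ^ 'n ^ 'n" and C :: "real ^ 'n"
    and Y :: "(nat \<Rightarrow> real) \<Rightarrow> (nat \<Rightarrow> real)"
  assumes "Y \<in> qpoly_ops"
    and "in_l2p (\<lambda>k. C \<bullet> (((\<lambda>v. A *v v) ^^ k) x0))"
  shows "\<exists>(m::nat) (xb0::nat \<Rightarrow> real) (Ab::nat \<Rightarrow> nat \<Rightarrow> real) (Cb::nat \<Rightarrow> real).
           Y (\<lambda>k. C \<bullet> (((\<lambda>v. A *v v) ^^ k) x0)) = sys_output m xb0 Ab Cb
         \<and> in_l2p (sys_output m xb0 Ab Cb)"
proof -
  let ?S = "{w. realizable w \<and> in_l2p w}"
  have "Y (\<lambda>k. C \<bullet> (((\<lambda>v. A *v v) ^^ k) x0)) \<in> ?S"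
    using assms(1)
  proof (rule qpoly_ops_closed)
    show "(\<lambda>k. C \<bullet> (((\<lambda>v. A *v v) ^^ k) x0)) \<in> ?S"
      using assms(2) realizable_vec by blast
  qed (simp_all add: realizable_zero realizable_add realizable_cmult realizable_fshift
      realizable_bshift in_l2p_zero in_l2p_add in_l2p_cmult in_l2p_fshift in_l2p_bshift)
  then obtain m xb0 Ab Cb where "Y (\<lambda>k. C \<bullet> (((\<lambda>v. A *v v) ^^ k) x0)) = sys_output m xb0 Ab Cb"
    and "in_l2p (sys_output m xb0 Ab Cb)"
    unfolding realizable_def by auto
  then show ?thesis by blast
qed

end
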